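(* Let $n\ge2$ and $0\le\delta<\frac1n$. Let $B=I-\delta e^{n\times n}$ and let $\mathcal B=\{b_1,\dots,b_n\}$ be the set of columns of $B$. Let $\alpha=\frac{1}{\sqrt{\delta^2n-2\delta+1}}$ and $\mathcal P^\delta=\alpha\mathcal B\cup(-\alpha\mathcal B)=\{\alpha b_1,\dots,\alpha b_n,-\alpha b_1,\dots,-\alpha b_n\}$. Then $\mathcal P^\delta$ is a positive basis of $\mathbb R^n$ with cosine measure $\frac{1-\delta n}{\sqrt{n(\delta^2n-2\delta+1)}}$.
   Context: $e^{n\times n}$ is the $n\times n$ all-ones matrix. A finite set $\mathcal P$ is a positive basis if its positive span $\{\sum\lambda_id_i:\lambda_i\ge0\}$ is $\mathbb R^n$ and no $d\in\mathcal P$ lies in the positive span of $\mathcal P\setminus\{d\}$. The cosine measure of a finite $\mathcal S\subset\mathbb R^n\setminus\{\mathbf 0\}$ is $\min_{\|u\|=1}\max_{d\in\mathcal S}\frac{d^\top u}{\|d\|}$. *)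

theory Defs
  imports "HOL-Analysis.Analysis"
begin

definition pos_span :: "('a::real_vector) set \<Rightarrow> 'a set" where
  "pos_span P = {x. \<exists>l. (\<forall>d\<in>P. l d \<ge> 0) \<and> x = (\<Sum>d\<in>P. l d *\<^sub>R d)}"

definition positive_basis :: "('a::real_vector) set \<Rightarrow> bool" where
  "positive_basis P \<longleftrightarrow> finite P \<and> pos_span P = UNIV \<and>
     (\<forall>d\<in>P. d \<notin> pos_span (P - {d}))"

text \<open>Cosine measure: min over unit vectors u of max over d of d.u/|d|
  (the minimum is attained, so we write it as an infimum).\<close>
definition cosine_measure :: "('a::real_inner) set \<Rightarrow> real" where
  "cosine_measure S = (INF u\<in>{u. norm u = 1}. Max ((\<lambda>d. (d \<bullet> u) / norm d) ` S))"

definition ones_mat :: "real^'n^'n" where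
  "ones_mat = (\<chi> i j. 1)"

end

theory Submission
  imports Defs
begin

(*
  The columns b_j = e_j - \<delta>1 of B = I - \<delta>J have the biorthogonal family w_k = e_k + \<kappa>1
  with \<kappa> = \<delta> / (1 - \<delta>n), i.e. B^-1 = I + \<kappa>J. Any basis with a biorthogonal family
  gives the positive basis [B, -B]: the expansion x = \<Sum>_j (w_j \<bullet> x) b_j shows that the
  vectors +-b_j positively span, and w_k separates b_k from all other generators. If |b_j \<bullet> u| is below
  (1 - \<delta>n) / sqrt n for every j, then u = B^-1 (b_j \<bullet> u)_j has all coordinates below
  1 / sqrt n, so u is not a unit vector; the bound is attained at u = 1 / sqrt n.
*)

lemma pos_span_zero: "0 \<in> pos_span P"
  unfolding pos_span_def by (auto intro: exI[of _ "\<lambda>_. 0"])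

lemma pos_span_add:
  assumes "x \<in> pos_span P" "y \<in> pos_span P"
  shows "x + y \<in> pos_span P"
proof -
  obtain l l' where "\<forall>d\<in>P. l d \<ge> 0" "x = (\<Sum>d\<in>P. l d *\<^sub>R d)"
    and "\<forall>d\<in>P. l' d \<ge> 0" "y = (\<Sum>d\<in>P. l' d *\<^sub>R d)"
    using assms unfolding pos_span_def by blast
  then show ?thesis
    unfolding pos_span_def
    by (auto intro!: exI[of _ "\<lambda>d. l d + l' d"] simp: scaleR_add_left sum.distrib)
qed

lemma pos_span_sum:
  assumes "\<And>i. i \<in> I \<Longrightarrow> f i \<in> pos_span P"
  shows "sum f I \<in> pos_span P"
  using assms by (induction I rule: infinite_finite_induct) (auto intro: pos_span_zero pos_span_add)

lemma pos_span_scaleR: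
  assumes "x \<in> pos_span P" "c \<ge> 0"
  shows "c *\<^sub>R x \<in> pos_span P"
proof -
  obtain l where "\<forall>d\<in>P. l d \<ge> 0" "x = (\<Sum>d\<in>P. l d *\<^sub>R d)"
    using assms(1) unfolding pos_span_def by blast
  then show ?thesis
    unfolding pos_span_def using assms(2)
    by (auto intro!: exI[of _ "\<lambda>d. c * l d"] simp: scaleR_sum_right)
qed

lemma pos_span_superset:
  assumes "finite P" "d \<in> P"
  shows "d \<in> pos_span P"
proof -
  have "(\<Sum>e\<in>P. (if e = d then 1 else 0) *\<^sub>R e) = (\<Sum>e\<in>P. if e = d then d else 0)"
    by (rule sum.cong) auto
  then have "d = (\<Sum>e\<in>P. (if e = d then 1 else 0) *\<^sub>R e)"
    using assms by simp
  then show ?thesis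
    unfolding pos_span_def by (auto intro!: exI[of _ "\<lambda>e. if e = d then 1 else 0"])
qed

lemma not_in_pos_span_if_separated:
  fixes u :: "'a::real_inner"
  assumes "u \<bullet> d > 0" and "\<And>e. e \<in> Q \<Longrightarrow> u \<bullet> e \<le> 0"
  shows "d \<notin> pos_span Q"
proof
  assume "d \<in> pos_span Q"
  then obtain l where l: "\<forall>e\<in>Q. l e \<ge> 0" "d = (\<Sum>e\<in>Q. l e *\<^sub>R e)"
    unfolding pos_span_def by blast
  then have "u \<bullet> d = (\<Sum>e\<in>Q. l e * (u \<bullet> e))"
    by (simp add: inner_sum_right)
  also have "\<dots> \<le> 0"
    using l(1) assms(2) by (intro sum_nonpos) (simp add: mult_nonneg_nonpos)
  finally show False
    using assms(1) by simp
qed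

definition plus_minus :: "('i \<Rightarrow> 'a::real_vector) \<Rightarrow> 'i set \<Rightarrow> 'a set" where
  "plus_minus b I = b ` I \<union> (\<lambda>j. - b j) ` I"

lemma plus_minus_uminus: "plus_minus (\<lambda>j. - b j) I = plus_minus b I"
  unfolding plus_minus_def by (auto simp: image_image)

lemma finite_plus_minus: "finite I \<Longrightarrow> finite (plus_minus b I)"
  unfolding plus_minus_def by simp

lemma biorthogonal_not_in_pos_span:
  fixes b w :: "'i \<Rightarrow> 'a::real_inner"
  assumes biorth: "\<And>j k. j \<in> I \<Longrightarrow> k \<in> I \<Longrightarrow> b j \<bullet> w k = (if j = k then 1 else 0)"
    and "k \<in> I"
  shows "b k \<notin> pos_span (plus_minus b I - {b k})"
proof (rule not_in_pos_span_if_separated[where u = "w k"])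
  show "w k \<bullet> b k > 0"
    using biorth \<open>k \<in> I\<close> by (simp add: inner_commute)
  fix e assume "e \<in> plus_minus b I - {b k}"
  then consider j where "j \<in> I" "j \<noteq> k" "e = b j" | j where "j \<in> I" "e = - b j"
    unfolding plus_minus_def by blast
  then show "w k \<bullet> e \<le> 0"
    by cases (use biorth \<open>k \<in> I\<close> in \<open>auto simp: inner_commute\<close>)
qed

lemma positive_basis_plus_minus_biorthogonal:
  fixes b w :: "'i \<Rightarrow> 'a::real_inner"
  assumes "finite I"
    and expansion: "\<And>x. x = (\<Sum>j\<in>I. (w j \<bullet> x) *\<^sub>R b j)"
    and biorth: "\<And>j k. j \<in> I \<Longrightarrow> k \<in> I \<Longrightarrow> b j \<bullet> w k = (if j = k then 1 else 0)"
  shows "positive_basis (plus_minus b I)"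
proof -
  let ?P = "plus_minus b I"
  have generators: "b j \<in> pos_span ?P" "- b j \<in> pos_span ?P" if "j \<in> I" for j
    using that \<open>finite I\<close> by (auto intro!: pos_span_superset finite_plus_minus simp: plus_minus_def)
  have "c *\<^sub>R b j \<in> pos_span ?P" if "j \<in> I" for c j
  proof (cases "c \<ge> 0")
    case True
    then show ?thesis using generators(1)[OF that] by (rule pos_span_scaleR[rotated])
  next
    case False
    then have "(- c) *\<^sub>R (- b j) \<in> pos_span ?P"
      using generators(2)[OF that] by (intro pos_span_scaleR) auto
    then show ?thesis by simp
  qed
  then have "x \<in> pos_span ?P" for x
    by (subst expansion) (auto intro: pos_span_sum)
  moreover have "d \<notin> pos_span (?P - {d})" if "d \<in> ?P" for d
  proof -
    have biorth': "\<And>j k. j \<in> I \<Longrightarrow> k \<in> I \<Longrightarrow> - b j \<bullet> - w k = (if j = k then 1 else 0)"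
      using biorth by simp
    from that consider k where "k \<in> I" "d = b k" | k where "k \<in> I" "d = - b k"
      unfolding plus_minus_def by blast
    then show ?thesis
      by cases (use biorthogonal_not_in_pos_span[OF biorth] biorthogonal_not_in_pos_span[OF biorth']
                in \<open>auto simp: plus_minus_uminus\<close>)
  qed
  ultimately show ?thesis
    unfolding positive_basis_def using \<open>finite I\<close> by (auto intro: finite_plus_minus)
qed

lemma cosine_measure_eqI:
  fixes S :: "'a::real_inner set"
  assumes "finite S"
    and lower: "\<And>u. norm u = 1 \<Longrightarrow> \<exists>d\<in>S. \<gamma> \<le> (d \<bullet> u) / norm d"
    and "norm u\<^sub>0 = 1" and upper: "\<And>d. d \<in> S \<Longrightarrow> (d \<bullet> u\<^sub>0) / norm d \<le> \<gamma>"
  shows "cosine_measure S = \<gamma>"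
proof -
  let ?M = "\<lambda>u. Max ((\<lambda>d. (d \<bullet> u) / norm d) ` S)"
  have "S \<noteq> {}"
    using lower[OF \<open>norm u\<^sub>0 = 1\<close>] by blast
  then have ge: "\<gamma> \<le> ?M u" if "norm u = 1" for u
    using lower[OF that] \<open>finite S\<close> by (simp add: Max_ge_iff)
  have "?M u\<^sub>0 \<le> \<gamma>"
    using upper \<open>finite S\<close> \<open>S \<noteq> {}\<close> by simp
  then have "?M u\<^sub>0 = \<gamma>"
    using ge[OF \<open>norm u\<^sub>0 = 1\<close>] by simp
  then show ?thesis
    unfolding cosine_measure_def using \<open>norm u\<^sub>0 = 1\<close> ge
    by (intro cInf_eq_minimum) (auto intro: image_eqI[where x = u\<^sub>0])
qed

lemma column_identity_minus_ones:
  "column j (mat 1 - \<delta> *\<^sub>R ones_mat :: real^'n^'n) = axis j 1 - \<delta> *\<^sub>R 1"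
  by (simp add: column_def mat_def ones_mat_def axis_def vec_eq_iff)

lemma inner_ones: "(1 :: real^'n) \<bullet> u = (\<Sum>i\<in>UNIV. u $ i)"
  by (simp add: inner_vec_def)

lemma inner_axis_minus_ones:
  fixes u :: "real^'n"
  shows "(axis j 1 - \<delta> *\<^sub>R 1) \<bullet> u = u $ j - \<delta> * (\<Sum>i\<in>UNIV. u $ i)"
  by (simp add: inner_diff_left inner_axis' inner_ones)

lemma sum_axis_plus_ones: "(\<Sum>i\<in>UNIV. (axis k 1 + c *\<^sub>R 1 :: real^'n) $ i) = 1 + c * real CARD('n)"
  by (simp add: sum.distrib axis_def)

lemma axis_minus_ones_biorthogonal:
  assumes "\<delta> * real CARD('n) \<noteq> 1"
  defines "\<kappa> \<equiv> \<delta> / (1 - \<delta> * real CARD('n))"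
  shows "(axis j 1 - \<delta> *\<^sub>R 1) \<bullet> (axis k 1 + \<kappa> *\<^sub>R 1 :: real^'n) = (if j = k then 1 else 0)"
proof -
  have "\<kappa> * (1 - \<delta> * real CARD('n)) = \<delta>"
    using assms by (simp add: \<kappa>_def)
  then show ?thesis
    unfolding inner_axis_minus_ones sum_axis_plus_ones by (simp add: axis_def algebra_simps)
qed

lemma axis_minus_ones_expansion:
  fixes x :: "real^'n"
  assumes "\<delta> * real CARD('n) \<noteq> 1"
  defines "\<kappa> \<equiv> \<delta> / (1 - \<delta> * real CARD('n))"
  shows "x = (\<Sum>j\<in>UNIV. ((axis j 1 + \<kappa> *\<^sub>R 1) \<bullet> x) *\<^sub>R (axis j 1 - \<delta> *\<^sub>R 1))"
proof -
  define S where "S = (\<Sum>i\<in>UNIV. x $ i)"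
  define c where "c j = (axis j 1 + \<kappa> *\<^sub>R 1) \<bullet> x" for j
  have c: "c j = x $ j + \<kappa> * S" for j
    by (simp add: c_def S_def inner_add_left inner_axis' inner_ones)
  have kappa: "\<kappa> * (1 - \<delta> * real CARD('n)) = \<delta>"
    using assms by (simp add: \<kappa>_def)
  have "(\<Sum>j\<in>UNIV. c j *\<^sub>R (axis j 1 - \<delta> *\<^sub>R 1)) $ i = x $ i" for i
  proof -
    have "(\<Sum>j\<in>UNIV. c j *\<^sub>R (axis j 1 - \<delta> *\<^sub>R 1)) $ i
        = (\<Sum>j\<in>UNIV. (if i = j then c j else 0) - \<delta> * c j)"
      by (auto simp: axis_def algebra_simps intro!: sum.cong)
    also have "\<dots> = x $ i + (\<kappa> * (1 - \<delta> * real CARD('n)) - \<delta>) * S"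
      by (simp add: c sum_subtractf sum.distrib sum_distrib_left[symmetric] S_def[symmetric] algebra_simps)
    also have "\<dots> = x $ i"
      by (simp add: kappa)
    finally show ?thesis .
  qed
  then show ?thesis
    unfolding c_def vec_eq_iff by simp
qed

lemma sum_axis_minus_ones: "(\<Sum>i\<in>UNIV. (axis j 1 - \<delta> *\<^sub>R 1 :: real^'n) $ i) = 1 - \<delta> * real CARD('n)"
  by (simp add: sum_subtractf axis_def)

lemma norm_axis_minus_ones:
  "norm (axis j 1 - \<delta> *\<^sub>R 1 :: real^'n) = sqrt (\<delta>\<^sup>2 * real CARD('n) - 2 * \<delta> + 1)"
proof -
  have "(axis j 1 - \<delta> *\<^sub>R 1) \<bullet> (axis j 1 - \<delta> *\<^sub>R 1 :: real^'n) = (1 - \<delta>) - \<delta> * (1 - \<delta> * real CARD('n))"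
    unfolding inner_axis_minus_ones sum_axis_minus_ones by simp
  then show ?thesis
    by (simp add: norm_eq_sqrt_inner power2_eq_square algebra_simps)
qed

lemma axis_minus_ones_norm_sq_pos:
  assumes "0 \<le> \<delta>" and "\<delta> * real CARD('n::finite) < 1"
  shows "0 < \<delta>\<^sup>2 * real CARD('n) - 2 * \<delta> + 1"
proof -
  have "\<delta> < 1"
    using assms mult_left_mono[of 1 "real CARD('n)" \<delta>] by simp
  have "\<delta>\<^sup>2 * real CARD('n) - 2 * \<delta> + 1 = (1 - \<delta>)\<^sup>2 + \<delta>\<^sup>2 * (real CARD('n) - 1)"
    by (simp add: power2_eq_square algebra_simps)
  moreover have "0 < (1 - \<delta>)\<^sup>2"
    using \<open>\<delta> < 1\<close> by simp
  moreover have "0 \<le> \<delta>\<^sup>2 * (real CARD('n) - 1)"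
    by simp
  ultimately show ?thesis
    by linarith
qed

lemma exists_large_inner_axis_minus_ones:
  fixes u :: "real^'n"
  assumes "0 \<le> \<delta>" and "\<delta> * real CARD('n) < 1" and "norm u = 1"
  shows "\<exists>j. (1 - \<delta> * real CARD('n)) / sqrt (real CARD('n)) \<le> \<bar>(axis j 1 - \<delta> *\<^sub>R 1) \<bullet> u\<bar>"
proof (rule ccontr)
  define n where "n = real CARD('n)"
  define m where "m = (1 - \<delta> * n) / sqrt n"
  define S where "S = (\<Sum>i\<in>UNIV. u $ i)"
  define v where "v j = (axis j 1 - \<delta> *\<^sub>R 1) \<bullet> u" for j
  have v: "v j = u $ j - \<delta> * S" for j
    by (simp add: v_def S_def inner_axis_minus_ones)
  have "n > 0" and "1 - \<delta> * n > 0"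
    using assms by (simp_all add: n_def)
  assume "\<not> ?thesis"
  then have small: "\<bar>v j\<bar> < m" for j
    by (simp add: v_def m_def n_def not_le)
  have "(\<Sum>j\<in>UNIV. v j) = S * (1 - \<delta> * n)"
    by (simp add: v sum_subtractf S_def n_def algebra_simps)
  then have "\<bar>S\<bar> * (1 - \<delta> * n) = \<bar>\<Sum>j\<in>UNIV. v j\<bar>"
    using \<open>1 - \<delta> * n > 0\<close> by (simp add: abs_mult)
  also have "\<dots> \<le> (\<Sum>j\<in>UNIV. \<bar>v j\<bar>)"
    by (rule sum_abs)
  also have "\<dots> \<le> n * m"
    using sum_bounded_above[of UNIV "\<lambda>j. \<bar>v j\<bar>" m] small by (simp add: n_def less_imp_le)
  finally have S_bound: "\<bar>S\<bar> * (1 - \<delta> * n) \<le> n * m" .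
  have "\<bar>u $ j\<bar> < 1 / sqrt n" for j
  proof -
    have "\<bar>u $ j\<bar> \<le> \<bar>v j\<bar> + \<delta> * \<bar>S\<bar>"
      using abs_triangle_ineq[of "v j" "\<delta> * S"] \<open>0 \<le> \<delta>\<close> by (simp add: v abs_mult)
    then have "\<bar>u $ j\<bar> < m + \<delta> * \<bar>S\<bar>"
      using small[of j] by linarith
    then have "(1 - \<delta> * n) * \<bar>u $ j\<bar> < (1 - \<delta> * n) * (m + \<delta> * \<bar>S\<bar>)"
      using \<open>1 - \<delta> * n > 0\<close> by (rule mult_strict_left_mono)
    also have "\<dots> = (1 - \<delta> * n) * m + \<delta> * (\<bar>S\<bar> * (1 - \<delta> * n))"
      by (simp add: algebra_simps)
    also have "\<dots> \<le> (1 - \<delta> * n) * m + \<delta> * (n * m)"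
      using S_bound \<open>0 \<le> \<delta>\<close> by (intro add_left_mono mult_left_mono)
    also have "\<dots> = m"
      by (simp add: algebra_simps)
    also have "\<dots> = (1 - \<delta> * n) * (1 / sqrt n)"
      by (simp add: m_def)
    finally show ?thesis
      using mult_less_cancel_left_pos[OF \<open>1 - \<delta> * n > 0\<close>] by blast
  qed
  then have "\<bar>u $ j\<bar>\<^sup>2 < (1 / sqrt n)\<^sup>2" for j
    by (intro power_strict_mono) auto
  then have "(u $ j)\<^sup>2 < 1 / n" for j
    using \<open>n > 0\<close> by (simp add: power_divide)
  then have "(\<Sum>j\<in>UNIV. (u $ j)\<^sup>2) < (\<Sum>j\<in>(UNIV :: 'n set). 1 / n)"
    by (intro sum_strict_mono) auto
  also have "\<dots> = 1"
    using \<open>n > 0\<close> by (simp add: n_def)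
  finally show False
    using \<open>norm u = 1\<close> by (simp add: norm_eq_sqrt_inner inner_vec_def power2_eq_square)
qed

lemma inner_axis_minus_ones_diagonal:
  "(axis j 1 - \<delta> *\<^sub>R 1) \<bullet> ((1 / sqrt (real CARD('n))) *\<^sub>R 1 :: real^'n)
    = (1 - \<delta> * real CARD('n)) / sqrt (real CARD('n))"
proof -
  have "(axis j 1 - \<delta> *\<^sub>R 1) \<bullet> (1 :: real^'n) = 1 - \<delta> * real CARD('n)"
    unfolding inner_commute[of "axis j 1 - \<delta> *\<^sub>R 1" 1] inner_ones sum_axis_minus_ones ..
  then show ?thesis
    by simp
qed

lemma norm_ones: "norm (1 :: real^'n) = sqrt (real CARD('n))"
  by (simp add: norm_eq_sqrt_inner inner_ones)

lemma positive_basis_plus_minus_axis_minus_ones: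
  assumes "\<delta> * real CARD('n) \<noteq> 1" and "\<alpha> \<noteq> 0"
  shows "positive_basis (plus_minus (\<lambda>j. \<alpha> *\<^sub>R (axis j 1 - \<delta> *\<^sub>R 1 :: real^'n)) UNIV)"
proof (rule positive_basis_plus_minus_biorthogonal)
  define \<kappa> where "\<kappa> = \<delta> / (1 - \<delta> * real CARD('n))"
  let ?w = "\<lambda>k. (1 / \<alpha>) *\<^sub>R (axis k 1 + \<kappa> *\<^sub>R 1 :: real^'n)"
  show "x = (\<Sum>j\<in>UNIV. (?w j \<bullet> x) *\<^sub>R (\<alpha> *\<^sub>R (axis j 1 - \<delta> *\<^sub>R 1)))" for x
    using axis_minus_ones_expansion[OF assms(1), of x] \<open>\<alpha> \<noteq> 0\<close> by (simp add: \<kappa>_def)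
  show "(\<alpha> *\<^sub>R (axis j 1 - \<delta> *\<^sub>R 1)) \<bullet> ?w k = (if j = k then 1 else 0)" for j k
    using axis_minus_ones_biorthogonal[OF assms(1), of j k] \<open>\<alpha> \<noteq> 0\<close> by (simp add: \<kappa>_def)
qed simp

lemma cosine_measure_plus_minus_axis_minus_ones:
  assumes "0 \<le> \<delta>" and "\<delta> * real CARD('n) < 1" and "\<alpha> > 0"
  shows "cosine_measure (plus_minus (\<lambda>j. \<alpha> *\<^sub>R (axis j 1 - \<delta> *\<^sub>R 1 :: real^'n)) UNIV)
    = (1 - \<delta> * real CARD('n)) / sqrt (real CARD('n) * (\<delta>\<^sup>2 * real CARD('n) - 2 * \<delta> + 1))"
proof -
  define n where "n = real CARD('n)"
  define D where "D = \<delta>\<^sup>2 * n - 2 * \<delta> + 1"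
  define m where "m = (1 - \<delta> * n) / sqrt n"
  define b where "b j = (axis j 1 - \<delta> *\<^sub>R 1 :: real^'n)" for j
  define u\<^sub>0 where "u\<^sub>0 = (1 / sqrt n) *\<^sub>R (1 :: real^'n)"
  have "D > 0" and "m \<ge> 0"
    using axis_minus_ones_norm_sq_pos[OF assms(1,2)] assms(2) by (simp_all add: D_def m_def n_def)
  have norm_b: "norm (b j) = sqrt D" for j
    by (simp add: b_def D_def n_def norm_axis_minus_ones)
  have cosine: "(\<alpha> *\<^sub>R b j) \<bullet> u / norm (\<alpha> *\<^sub>R b j) = (b j \<bullet> u) / sqrt D"
    "(- (\<alpha> *\<^sub>R b j)) \<bullet> u / norm (- (\<alpha> *\<^sub>R b j)) = - (b j \<bullet> u) / sqrt D" for j u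
    using \<open>\<alpha> > 0\<close> by (simp_all add: norm_b)
  have "cosine_measure (plus_minus (\<lambda>j. \<alpha> *\<^sub>R b j) UNIV) = m / sqrt D"
  proof (rule cosine_measure_eqI)
    show "\<exists>d\<in>plus_minus (\<lambda>j. \<alpha> *\<^sub>R b j) UNIV. m / sqrt D \<le> d \<bullet> u / norm d"
      if unit: "norm u = 1" for u
    proof -
      obtain j where "m \<le> \<bar>b j \<bullet> u\<bar>"
        using exists_large_inner_axis_minus_ones[OF assms(1,2) unit] by (auto simp: b_def m_def n_def)
      then have "m / sqrt D \<le> \<bar>b j \<bullet> u\<bar> / sqrt D"
        using \<open>D > 0\<close> by (simp add: divide_right_mono)
      then have "m / sqrt D \<le> (b j \<bullet> u) / sqrt D \<or> m / sqrt D \<le> - (b j \<bullet> u) / sqrt D"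
        by (cases "b j \<bullet> u \<ge> 0") auto
      moreover have "\<alpha> *\<^sub>R b j \<in> plus_minus (\<lambda>j. \<alpha> *\<^sub>R b j) UNIV"
        and "- (\<alpha> *\<^sub>R b j) \<in> plus_minus (\<lambda>j. \<alpha> *\<^sub>R b j) UNIV"
        by (auto simp: plus_minus_def)
      ultimately show ?thesis
        by (metis cosine)
    qed
    have "b j \<bullet> u\<^sub>0 = m" for j
      unfolding b_def m_def n_def u\<^sub>0_def by (rule inner_axis_minus_ones_diagonal)
    moreover have "- (m / sqrt D) \<le> m / sqrt D"
      using \<open>m \<ge> 0\<close> \<open>D > 0\<close> by simp
    ultimately show "d \<bullet> u\<^sub>0 / norm d \<le> m / sqrt D"
      if "d \<in> plus_minus (\<lambda>j. \<alpha> *\<^sub>R b j) UNIV" for d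
      using that \<open>\<alpha> > 0\<close> by (auto simp: plus_minus_def norm_b)
  qed (simp_all add: finite_plus_minus u\<^sub>0_def n_def norm_ones)
  then show ?thesis
    by (simp add: b_def m_def D_def n_def real_sqrt_mult)
qed

theorem theorem15:
  fixes \<delta> :: real
  assumes "CARD('n::finite) \<ge> 2"
    and "0 \<le> \<delta>" and "\<delta> < 1 / real CARD('n)"
  shows "let n = real CARD('n);
             B = (mat 1 - \<delta> *\<^sub>R ones_mat) :: real^'n^'n;
             \<alpha> = 1 / sqrt (\<delta>^2 * n - 2 * \<delta> + 1);
             P = (\<lambda>j. \<alpha> *\<^sub>R column j B) ` UNIV \<union> (\<lambda>j. - (\<alpha> *\<^sub>R column j B)) ` UNIV
         in positive_basis P \<and>
            cosine_measure P = (1 - \<delta> * n) / sqrt (n * (\<delta>^2 * n - 2 * \<delta> + 1))"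
proof -
  define \<alpha> where "\<alpha> = 1 / sqrt (\<delta>\<^sup>2 * real CARD('n) - 2 * \<delta> + 1)"
  have \<delta>n_less_1: "\<delta> * real CARD('n) < 1"
    using assms(3) by (simp add: field_simps)
  have "\<alpha> > 0"
    using axis_minus_ones_norm_sq_pos[OF assms(2) \<delta>n_less_1] by (simp add: \<alpha>_def)
  have "positive_basis (plus_minus (\<lambda>j. \<alpha> *\<^sub>R (axis j 1 - \<delta> *\<^sub>R 1 :: real^'n)) UNIV)"
    using \<delta>n_less_1 \<open>\<alpha> > 0\<close> by (intro positive_basis_plus_minus_axis_minus_ones) auto
  moreover note cosine_measure_plus_minus_axis_minus_ones[OF assms(2) \<delta>n_less_1 \<open>\<alpha> > 0\<close>]
  ultimately show ?thesis
    unfolding Let_def column_identity_minus_ones \<alpha>_def[symmetric] by (simp add: plus_minus_def)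
qed

end
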